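(* Let $B\subset\mathbb C$ be a Bernstein set. Then there exists a perfectly everywhere surjective function $f:\mathbb C\to\mathbb C$ such that $f(x)=1$ for every $x\in\mathbb C\setminus B$.
   Context: A perfect subset of $\mathbb C$ is a nonempty closed set with no isolated points. A set $B\subset\mathbb C$ is a Bernstein set if both $B$ and $\mathbb C\setminus B$ meet every perfect subset of $\mathbb C$. A function $f:\mathbb C\to\mathbb C$ is perfectly everywhere surjective if $f(P)=\mathbb C$ for every perfect set $P\subset\mathbb C$. *)

theory Defs
  imports "HOL-Analysis.Analysis"
begin

definition perfect_set :: "complex set \<Rightarrow> bool" where
  "perfect_set P \<longleftrightarrow> P \<noteq> {} \<and> closed P \<and> (\<forall>x\<in>P. x islimpt P)"

definition bernstein_set :: "complex set \<Rightarrow> bool" where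
  "bernstein_set B \<longleftrightarrow>
     (\<forall>P. perfect_set P \<longrightarrow> B \<inter> P \<noteq> {} \<and> (UNIV - B) \<inter> P \<noteq> {})"

definition perfectly_everywhere_surjective :: "(complex \<Rightarrow> complex) \<Rightarrow> bool" where
  "perfectly_everywhere_surjective f \<longleftrightarrow> (\<forall>P. perfect_set P \<longrightarrow> f ` P = UNIV)"

end

theory Submission
  imports Defs
begin

text \<open>Every perfect set \<open>P\<close> contains continuum many pairwise disjoint perfect subsets, the branch sets
  of a Cantor scheme of closed balls in which at every level one binary digit is prescribed by a set of
  naturals and another one is free. A Bernstein set meets all of them, so \<open>B \<inter> P\<close> has the cardinality
  of the continuum. There are only continuum many pairs \<open>(P, y)\<close> of a perfect set and a value, so a
  transfinite recursion selects pairwise distinct points \<open>g (P, y) \<in> B \<inter> P\<close>; now let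
  \<open>f (g (P, y)) = y\<close> and \<open>f = 1\<close> elsewhere.\<close>

unbundle cardinal_syntax

lemma obtain_radius_disjoint_cballs:
  fixes p :: "'k::finite \<Rightarrow> 'a::metric_space"
  assumes "inj p" "range p \<subseteq> ball c r"
  obtains \<rho> where "0 < \<rho>" "\<rho> \<le> r / 2" "\<And>k. cball (p k) \<rho> \<subseteq> ball c r"
    "\<And>k k'. k \<noteq> k' \<Longrightarrow> cball (p k) \<rho> \<inter> cball (p k') \<rho> = {}"
proof -
  have in_ball: "dist c (p k) < r" for k
    using range_subsetD[OF assms(2)] by simp
  have "r > 0"
    using in_ball[of undefined] by (metis le_less_trans zero_le_dist)
  have "\<forall>\<^sub>F \<rho> in at_right (0::real). 0 < \<rho>"
    by (rule eventually_at_right_less)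
  moreover have "\<forall>\<^sub>F \<rho> in at_right 0. \<rho> \<le> r / 2"
    using \<open>r > 0\<close> by (auto simp: eventually_at_right_field intro!: exI[of _ "r / 2"])
  moreover have "\<forall>\<^sub>F \<rho> in at_right 0. \<forall>k. \<rho> < r - dist c (p k)"
    using in_ball
    by (intro eventually_all_finite) (auto simp: eventually_at_right_field intro!: exI[of _ "r - dist c (p _)"])
  moreover have "\<forall>\<^sub>F \<rho> in at_right 0. \<forall>k k'. k \<noteq> k' \<longrightarrow> 2 * \<rho> < dist (p k) (p k')"
  proof (intro eventually_all_finite)
    fix k k'
    show "\<forall>\<^sub>F \<rho> in at_right 0. k \<noteq> k' \<longrightarrow> 2 * \<rho> < dist (p k) (p k')"
    proof (cases "k = k'")
      case False
      then have "dist (p k) (p k') > 0" using assms(1) by (simp add: inj_eq)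
      then show ?thesis
        by (auto simp: eventually_at_right_field intro!: exI[of _ "dist (p k) (p k') / 2"])
    qed simp
  qed
  ultimately have "\<forall>\<^sub>F \<rho> in at_right 0. 0 < \<rho> \<and> \<rho> \<le> r / 2 \<and> (\<forall>k. \<rho> < r - dist c (p k))
      \<and> (\<forall>k k'. k \<noteq> k' \<longrightarrow> 2 * \<rho> < dist (p k) (p k'))"
    by eventually_elim auto
  then have "\<exists>\<rho>. 0 < \<rho> \<and> \<rho> \<le> r / 2 \<and> (\<forall>k. \<rho> < r - dist c (p k))
      \<and> (\<forall>k k'. k \<noteq> k' \<longrightarrow> 2 * \<rho> < dist (p k) (p k'))"
    by (rule eventually_happens'[rotated]) simp
  then obtain \<rho> where \<rho>: "0 < \<rho>" "\<rho> \<le> r / 2" "\<And>k. \<rho> < r - dist c (p k)"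
    "\<And>k k'. k \<noteq> k' \<Longrightarrow> 2 * \<rho> < dist (p k) (p k')"
    by blast
  show ?thesis
  proof (rule that)
    show "cball (p k) \<rho> \<subseteq> ball c r" for k
    proof
      fix x assume "x \<in> cball (p k) \<rho>"
      then have "dist c x \<le> dist c (p k) + \<rho>"
        using dist_triangle[of c x "p k"] by simp
      then show "x \<in> ball c r" using \<rho>(3)[of k] by simp
    qed
    show "cball (p k) \<rho> \<inter> cball (p k') \<rho> = {}" if "k \<noteq> k'" for k k'
      using \<rho>(4)[OF that] by (intro disjoint_cballI) simp
  qed (use \<rho> in auto)
qed

lemma islimpt_obtain_disjoint_cballs:
  fixes c :: "'a::metric_space"
  assumes "c islimpt S" "r > 0"
  obtains p :: "'k::finite \<Rightarrow> 'a" and \<rho> where "range p \<subseteq> S" "0 < \<rho>" "\<rho> \<le> r / 2"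
    "\<And>k. cball (p k) \<rho> \<subseteq> ball c r"
    "\<And>k k'. k \<noteq> k' \<Longrightarrow> cball (p k) \<rho> \<inter> cball (p k') \<rho> = {}"
proof -
  have "infinite (S \<inter> ball c r)"
    using assms islimpt_eq_infinite_ball by blast
  then have "|UNIV :: 'k set| \<le>o |S \<inter> ball c r|"
    by (intro ordLess_imp_ordLeq finite_ordLess_infinite card_of_Well_order) (auto simp: Field_card_of)
  then obtain p :: "'k \<Rightarrow> 'a" where p: "inj p" "range p \<subseteq> S \<inter> ball c r"
    by (auto simp: card_of_ordLeq[symmetric])
  have p_ball: "range p \<subseteq> ball c r"
    using p(2) by blast
  obtain \<rho> where \<rho>: "0 < \<rho>" "\<rho> \<le> r / 2" "\<And>k. cball (p k) \<rho> \<subseteq> ball c r"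
    "\<And>k k'. k \<noteq> k' \<Longrightarrow> cball (p k) \<rho> \<inter> cball (p k') \<rho> = {}"
    using obtain_radius_disjoint_cballs[OF p(1) p_ball] by blast
  show ?thesis
  proof (rule that)
    show "range p \<subseteq> S" using p(2) by blast
  qed (fact \<rho>)+
qed

lemma two_halfpow_less: "e > 0 \<Longrightarrow> \<exists>n. 2 * (1 / 2 :: real) ^ n < e"
  using real_arch_pow_inv[of "e / 2" "1 / 2 :: real"] by (auto simp: field_simps)

locale cantor_scheme =
  fixes P :: "'a::complete_space set" and p0 :: 'a
  assumes closed_P: "closed P" and islimpt_P: "\<And>x. x \<in> P \<Longrightarrow> x islimpt P" and p0_in_P: "p0 \<in> P"
begin

definition children_ok :: "'a \<Rightarrow> real \<Rightarrow> (bool \<times> bool \<Rightarrow> 'a \<times> real) \<Rightarrow> bool" where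
  "children_ok c r ch \<longleftrightarrow>
     (\<forall>k. fst (ch k) \<in> P \<and> 0 < snd (ch k) \<and> snd (ch k) \<le> r / 2
        \<and> cball (fst (ch k)) (snd (ch k)) \<subseteq> ball c r) \<and>
     (\<forall>k k'. k \<noteq> k' \<longrightarrow> cball (fst (ch k)) (snd (ch k)) \<inter> cball (fst (ch k')) (snd (ch k')) = {})"

lemma children_okD:
  assumes "children_ok c r ch"
  shows "fst (ch k) \<in> P" "0 < snd (ch k)" "snd (ch k) \<le> r / 2"
    "cball (fst (ch k)) (snd (ch k)) \<subseteq> ball c r"
    "k \<noteq> k' \<Longrightarrow> cball (fst (ch k)) (snd (ch k)) \<inter> cball (fst (ch k')) (snd (ch k')) = {}"
  using assms unfolding children_ok_def by blast+

definition children :: "'a \<Rightarrow> real \<Rightarrow> bool \<times> bool \<Rightarrow> 'a \<times> real" where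
  "children c r = (SOME ch. children_ok c r ch)"

lemma children_ok_children:
  assumes "c \<in> P" "r > 0"
  shows "children_ok c r (children c r)"
proof -
  obtain p :: "bool \<times> bool \<Rightarrow> 'a" and \<rho> where "range p \<subseteq> P" "0 < \<rho>" "\<rho> \<le> r / 2"
    "\<And>k. cball (p k) \<rho> \<subseteq> ball c r"
    "\<And>k k'. k \<noteq> k' \<Longrightarrow> cball (p k) \<rho> \<inter> cball (p k') \<rho> = {}"
    using islimpt_obtain_disjoint_cballs[OF islimpt_P[OF assms(1)] assms(2)] by blast
  then have "children_ok c r (\<lambda>k. (p k, \<rho>))"
    unfolding children_ok_def by auto
  then show ?thesis
    unfolding children_def by (rule someI[of "children_ok c r"])
qed

text \<open>In the branch set of \<open>s\<close>
  the first components of the digits spell out \<open>s\<close>, while the free second components make it perfect.\<close>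

definition node :: "(bool \<times> bool) list \<Rightarrow> 'a \<times> real" where
  "node t = fold (\<lambda>k (c, r). children c r k) t (p0, 1)"

definition cell :: "(bool \<times> bool) list \<Rightarrow> 'a set" where
  "cell t = cball (fst (node t)) (snd (node t))"

lemma node_snoc: "node (t @ [k]) = children (fst (node t)) (snd (node t)) k"
  by (simp add: node_def case_prod_beta)

lemma node_bounds: "fst (node t) \<in> P \<and> 0 < snd (node t) \<and> snd (node t) \<le> (1 / 2) ^ length t"
proof (induction t rule: rev_induct)
  case Nil
  then show ?case using p0_in_P by (simp add: node_def)
next
  case (snoc k t)
  then have "children_ok (fst (node t)) (snd (node t)) (children (fst (node t)) (snd (node t)))"
    by (intro children_ok_children) auto
  from children_okD[OF this, of k] snoc show ?case
    unfolding node_snoc by auto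
qed

lemma children_ok_node: "children_ok (fst (node t)) (snd (node t)) (children (fst (node t)) (snd (node t)))"
  using node_bounds children_ok_children by blast

lemma closed_cell: "closed (cell t)"
  by (simp add: cell_def)

lemma center_in_cell: "fst (node t) \<in> cell t"
  using node_bounds[of t] by (simp add: cell_def)

lemma cell_snoc_subset: "cell (t @ [k]) \<subseteq> cell t"
  using children_okD(4)[OF children_ok_node, of t k] ball_subset_cball
  unfolding cell_def node_snoc by blast

lemma cells_snoc_disjoint: "k \<noteq> k' \<Longrightarrow> cell (t @ [k]) \<inter> cell (t @ [k']) = {}"
  using children_okD(5)[OF children_ok_node, of k k' t] unfolding cell_def node_snoc by blast

lemma cell_append_subset: "cell (t @ u) \<subseteq> cell t"
proof (induction u rule: rev_induct)
  case (snoc k u)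
  then show ?case using cell_snoc_subset[of "t @ u" k] by simp
qed simp

lemma cells_disjoint: "length t = length t' \<Longrightarrow> t \<noteq> t' \<Longrightarrow> cell t \<inter> cell t' = {}"
proof (induction t arbitrary: t' rule: rev_induct)
  case (snoc k u t')
  then obtain u' k' where t': "t' = u' @ [k']" "length u' = length u"
    by (cases t' rule: rev_exhaust) auto
  show ?case
  proof (cases "u = u'")
    case True
    with snoc.prems t' show ?thesis using cells_snoc_disjoint by blast
  next
    case False
    then have "cell u \<inter> cell u' = {}" using snoc.IH t'(2) by metis
    then show ?thesis using cell_snoc_subset t'(1) by blast
  qed
qed simp

lemma dist_le_in_cell: "x \<in> cell t \<Longrightarrow> y \<in> cell t \<Longrightarrow> dist x y \<le> 2 * (1 / 2) ^ length t"
  using dist_triangle[of x y "fst (node t)"] node_bounds[of t]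
  by (auto simp: cell_def dist_commute)

lemma common_point_of_chain:
  assumes "\<And>n. \<exists>k. T (Suc n) = T n @ [k]"
  obtains z where "\<And>n. z \<in> cell (T n)"
proof -
  have len: "n \<le> length (T n)" for n
  proof (induction n)
    case (Suc n)
    then show ?case using assms[of n] by auto
  qed simp
  have "decseq (\<lambda>n. cell (T n))"
    by (rule decseq_SucI) (metis assms cell_snoc_subset)
  moreover have "\<exists>n. \<forall>x\<in>cell (T n). \<forall>y\<in>cell (T n). dist x y < e" if "e > 0" for e
  proof -
    obtain n where n: "2 * (1 / 2 :: real) ^ n < e" using two_halfpow_less[OF \<open>e > 0\<close>] ..
    have "(1 / 2 :: real) ^ length (T n) \<le> (1 / 2) ^ n"
      using len by (intro power_decreasing) auto
    then have "dist x y < e" if "x \<in> cell (T n)" "y \<in> cell (T n)" for x y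
      using n dist_le_in_cell[OF that] by linarith
    then show ?thesis by blast
  qed
  ultimately show ?thesis
    using decreasing_closed_nest[of "\<lambda>n. cell (T n)"] closed_cell center_in_cell that
    by (metis decseqD empty_iff)
qed

definition encodes :: "nat set \<Rightarrow> (bool \<times> bool) list \<Rightarrow> bool" where
  "encodes s t \<longleftrightarrow> (\<forall>i<length t. fst (t ! i) = (i \<in> s))"

definition branch_set :: "nat set \<Rightarrow> 'a set" where
  "branch_set s = (\<Inter>n. \<Union>{cell t |t. length t = n \<and> encodes s t})"

lemma encodes_take: "encodes s t \<Longrightarrow> encodes s (take n t)"
  unfolding encodes_def by auto

lemma encodes_snoc: "encodes s t \<Longrightarrow> encodes s (t @ [(length t \<in> s, b)])"
  unfolding encodes_def by (auto simp: nth_append less_Suc_eq)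

lemma mem_branch_set: "z \<in> branch_set s \<longleftrightarrow> (\<forall>n. \<exists>t. length t = n \<and> encodes s t \<and> z \<in> cell t)"
  unfolding branch_set_def by blast

lemma closed_branch_set: "closed (branch_set s)"
proof -
  have "finite {t :: (bool \<times> bool) list. length t = n}" for n
    using finite_lists_length_eq[of "UNIV :: (bool \<times> bool) set" n] by simp
  then have "finite {cell t |t. length t = n \<and> encodes s t}" for n
    by (simp add: Collect_mono_iff rev_finite_subset setcompr_eq_image)
  then show ?thesis
    unfolding branch_set_def using closed_cell by (intro closed_INT ballI closed_Union) auto
qed

lemma branch_set_subset: "branch_set s \<subseteq> P"
proof
  fix z assume z: "z \<in> branch_set s"
  have "\<exists>y\<in>P. dist y z < e" if "e > 0" for e
  proof -
    obtain n where n: "2 * (1 / 2 :: real) ^ n < e" using two_halfpow_less \<open>e > 0\<close> by blast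
    obtain t where t: "length t = n" "z \<in> cell t" using z mem_branch_set by blast
    have "dist (fst (node t)) z < e"
      using dist_le_in_cell[OF center_in_cell t(2)] n t(1) by simp
    then show ?thesis using node_bounds[of t] by blast
  qed
  then show "z \<in> P"
    using closed_P closure_approachable closure_closed by metis
qed

lemma branch_set_meets_cell:
  assumes "encodes s t"
  obtains z where "z \<in> branch_set s" "z \<in> cell t"
proof -
  define T where "T n = t @ map (\<lambda>i. (i \<in> s, False)) [length t..<length t + n]" for n
  have "T (Suc n) = T n @ [(length (T n) \<in> s, False)]" for n
    by (simp add: T_def)
  then obtain z where z: "\<And>n. z \<in> cell (T n)"
    using common_point_of_chain[of T] by blast
  have "encodes s (T n)" for n
    using assms by (auto simp: T_def encodes_def nth_append)
  have "\<exists>t'. length t' = n \<and> encodes s t' \<and> z \<in> cell t'" for n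
  proof (cases "length t \<le> n")
    case True
    then show ?thesis
      using z[of "n - length t"] \<open>encodes s (T (n - length t))\<close> by (intro exI[of _ "T (n - length t)"]) (simp add: T_def)
  next
    case False
    then show ?thesis
      using z[of 0] cell_append_subset[of "take n t" "drop n t"] encodes_take[OF assms]
      by (intro exI[of _ "take n t"]) (auto simp: T_def)
  qed
  then have "z \<in> branch_set s"
    by (simp add: mem_branch_set)
  with z[of 0] that show ?thesis
    by (simp add: T_def)
qed

lemma branch_set_islimpt:
  assumes "z \<in> branch_set s"
  shows "z islimpt branch_set s"
  unfolding islimpt_approachable
proof (intro allI impI)
  fix e :: real assume "e > 0"
  then obtain n where n: "2 * (1 / 2 :: real) ^ n < e" using two_halfpow_less by blast
  obtain t where t: "length t = n" "encodes s t" "z \<in> cell t"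
    using assms mem_branch_set by blast
  obtain z1 z2 where z1: "z1 \<in> branch_set s" "z1 \<in> cell (t @ [(n \<in> s, False)])"
    and z2: "z2 \<in> branch_set s" "z2 \<in> cell (t @ [(n \<in> s, True)])"
    by (metis branch_set_meets_cell encodes_snoc t(1,2))
  have "dist x z < e" if "x \<in> cell t" for x
    using dist_le_in_cell[OF that t(3)] n t(1) by simp
  then have close: "dist z1 z < e" "dist z2 z < e"
    using z1(2) z2(2) cell_snoc_subset by blast+
  have "z1 \<noteq> z2"
    using cells_snoc_disjoint[of "(n \<in> s, False)" "(n \<in> s, True)" t] z1(2) z2(2) by auto
  then show "\<exists>x'\<in>branch_set s. x' \<noteq> z \<and> dist x' z < e"
  proof (cases "z1 = z")
    case True
    with \<open>z1 \<noteq> z2\<close> show ?thesis using z2(1) close(2) by (intro bexI[of _ z2]) auto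
  next
    case False
    then show ?thesis using z1(1) close(1) by (intro bexI[of _ z1]) auto
  qed
qed

lemma branch_sets_disjoint: "disjoint_family branch_set"
  unfolding disjoint_family_on_def
proof (intro ballI impI, rule ccontr)
  fix s s' :: "nat set" assume "s \<noteq> s'" "branch_set s \<inter> branch_set s' \<noteq> {}"
  then obtain m z where m: "(m \<in> s) \<noteq> (m \<in> s')" and "z \<in> branch_set s" "z \<in> branch_set s'"
    by blast
  then obtain t t' where t: "length t = Suc m" "encodes s t" "z \<in> cell t"
    and t': "length t' = Suc m" "encodes s' t'" "z \<in> cell t'"
    using mem_branch_set by metis
  then have "t \<noteq> t'"
    using m unfolding encodes_def by auto
  then show False
    using cells_disjoint[of t t'] t t' by auto
qed

end

lemma perfect_set_obtain_disjoint_perfect_subsets: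
  assumes "perfect_set P"
  obtains Q :: "nat set \<Rightarrow> complex set"
  where "\<And>s. perfect_set (Q s)" "\<And>s. Q s \<subseteq> P" "disjoint_family Q"
proof -
  obtain p0 where "p0 \<in> P" "closed P" "\<And>x. x \<in> P \<Longrightarrow> x islimpt P"
    using assms unfolding perfect_set_def by blast
  then interpret cantor_scheme P p0
    by unfold_locales
  have "branch_set s \<noteq> {}" for s
    using branch_set_meets_cell[of s "[]"] by (auto simp: encodes_def)
  then have "perfect_set (branch_set s)" for s
    unfolding perfect_set_def using closed_branch_set branch_set_islimpt by blast
  then show ?thesis
    using that branch_set_subset branch_sets_disjoint by blast
qed

lemma card_of_UNIV_le_if_meets_disjoint_family:
  fixes Q :: "'i \<Rightarrow> 'a set"
  assumes "disjoint_family Q" "\<And>i. A \<inter> Q i \<noteq> {}"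
  shows "|UNIV :: 'i set| \<le>o |A|"
proof -
  define h where "h i = (SOME x. x \<in> A \<inter> Q i)" for i
  have h: "h i \<in> A \<inter> Q i" for i
    unfolding h_def using assms(2)[of i] some_in_eq by metis
  have "inj h"
  proof (rule injI, rule ccontr)
    fix i j assume "h i = h j" "i \<noteq> j"
    then have "h i \<in> Q i \<inter> Q j" using h[of i] h[of j] by auto
    with assms(1) \<open>i \<noteq> j\<close> show False by (auto simp: disjoint_family_on_def)
  qed
  then show ?thesis
    using h card_of_ordLeq[of "UNIV :: 'i set" A] by blast
qed

lemma bernstein_set_inter_perfect_set_card:
  assumes "bernstein_set B" "perfect_set P"
  shows "|UNIV :: nat set set| \<le>o |B \<inter> P|"
proof -
  obtain Q :: "nat set \<Rightarrow> complex set"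
    where Q: "\<And>s. perfect_set (Q s)" "\<And>s. Q s \<subseteq> P" "disjoint_family Q"
    using perfect_set_obtain_disjoint_perfect_subsets[OF assms(2)] by blast
  have "B \<inter> P \<inter> Q s \<noteq> {}" for s
    using assms(1) Q(1,2)[of s] unfolding bernstein_set_def by blast
  then show ?thesis
    using card_of_UNIV_le_if_meets_disjoint_family[OF Q(3)] by blast
qed

lemma card_of_closed_sets_le: "|{C :: 'a::euclidean_space set. closed C}| \<le>o |UNIV :: nat set set|"
proof -
  obtain U :: "nat \<Rightarrow> 'a set" where U: "\<And>S. open S \<Longrightarrow> \<exists>k. S = \<Union>{U n |n. n \<in> k}"
    by (rule univ_second_countable_sequence) blast
  define code where "code C = {n. U n \<subseteq> - C}" for C
  have decode: "- C = \<Union>{U n |n. n \<in> code C}" if "closed C" for C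
  proof -
    obtain k where k: "- C = \<Union>{U n |n. n \<in> k}"
      using U[of "- C"] \<open>closed C\<close> by (auto simp: open_Compl)
    then have "k \<subseteq> code C"
      unfolding code_def by blast
    show ?thesis
    proof
      show "- C \<subseteq> \<Union>{U n |n. n \<in> code C}"
        using k \<open>k \<subseteq> code C\<close> by blast
      show "\<Union>{U n |n. n \<in> code C} \<subseteq> - C"
        unfolding code_def by blast
    qed
  qed
  have "inj_on code {C. closed C}"
  proof (rule inj_onI)
    fix C C' assume "C \<in> {C. closed C}" "C' \<in> {C. closed C}" "code C = code C'"
    then have "- C = - C'"
      using decode by simp
    then show "C = C'" by simp
  qed
  then show ?thesis
    using card_of_ordLeq by blast
qed

lemma card_of_perfect_sets_times_UNIV_le:
  "|{P. perfect_set P} \<times> (UNIV :: complex set)| \<le>o |UNIV :: nat set set|"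
proof -
  have "inj_on (\<lambda>(P, y). P \<times> {y}) ({P. perfect_set P} \<times> (UNIV :: complex set))"
    by (intro inj_onI) (auto simp: perfect_set_def)
  moreover have "(\<lambda>(P, y). P \<times> {y}) ` ({P. perfect_set P} \<times> UNIV) \<subseteq> {C :: (complex \<times> complex) set. closed C}"
    by (auto simp: perfect_set_def intro!: closed_Times)
  ultimately have "|{P. perfect_set P} \<times> (UNIV :: complex set)| \<le>o |{C :: (complex \<times> complex) set. closed C}|"
    using card_of_ordLeq by blast
  then show ?thesis
    using card_of_closed_sets_le ordLeq_transitive by blast
qed

text \<open>Transfinite recursion along a well-order of \<open>I\<close> of order type \<open>|I|\<close>: every index has fewer
  than \<open>|I|\<close> predecessors, so at each stage \<open>A i\<close> still contains an element not chosen before.\<close>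

lemma obtain_inj_on_selection:
  assumes "\<And>i. i \<in> I \<Longrightarrow> |I| \<le>o |A i|"
  obtains g where "inj_on g I" "\<And>i. i \<in> I \<Longrightarrow> g i \<in> A i"
proof -
  define r where "r = |I|"
  have wo: "wo_rel r"
    unfolding r_def wo_rel_def by (rule card_of_Well_order)
  define H where "H g i = (SOME x. x \<in> A i - g ` underS r i)" for g i
  define g where "g = wo_rel.worec r H"
  have "wo_rel.adm_wo r H"
    unfolding wo_rel.adm_wo_def[OF wo] H_def
    by (intro allI impI arg_cong[where f = Eps] ext) (auto simp: image_def)
  then have g_rec: "g i = H g i" for i
    unfolding g_def using wo_rel.worec_fixpoint[OF wo] by metis
  have "A i - g ` underS r i \<noteq> {}" if "i \<in> I" for i
  proof
    assume "A i - g ` underS r i = {}"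
    then have "|A i| \<le>o |underS r i|"
      using card_of_mono1 card_of_image ordLeq_transitive by (metis Diff_eq_empty_iff)
    moreover have "|underS r i| <o r"
      using card_of_underS[OF card_of_Card_order] that by (simp add: r_def Field_card_of)
    ultimately show False
      using assms[OF that] not_ordLess_ordLeq ordLeq_ordLess_trans r_def by blast
  qed
  then have g: "g i \<in> A i - g ` underS r i" if "i \<in> I" for i
    using g_rec[of i] that unfolding H_def by (metis ex_in_conv someI_ex)
  have "inj_on g I"
  proof (rule inj_onI, rule ccontr)
    fix i j assume ij: "i \<in> I" "j \<in> I" "g i = g j" "i \<noteq> j"
    then have "i \<in> underS r j \<or> j \<in> underS r i"
      using wo_rel.TOTAL[OF wo] by (auto simp: r_def Field_card_of total_on_def underS_def)
    then show False
      using g ij by (metis DiffD2 image_eqI)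
  qed
  then show ?thesis
    using that g by blast
qed

theorem proposition3p3:
  fixes B :: "complex set"
  assumes "bernstein_set B"
  shows "\<exists>f. perfectly_everywhere_surjective f \<and> (\<forall>x \<in> UNIV - B. f x = 1)"
proof -
  define I where "I = {P. perfect_set P} \<times> (UNIV :: complex set)"
  have "|I| \<le>o |B \<inter> fst i|" if "i \<in> I" for i
    using that card_of_perfect_sets_times_UNIV_le bernstein_set_inter_perfect_set_card[OF assms]
      ordLeq_transitive unfolding I_def by fastforce
  then obtain g where g_inj: "inj_on g I" and g: "\<And>i. i \<in> I \<Longrightarrow> g i \<in> B \<inter> fst i"
    using obtain_inj_on_selection[of I "\<lambda>i. B \<inter> fst i"] by blast
  define f where "f x = (if x \<in> g ` I then snd (inv_into I g x) else 1)" for x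
  have "f ` P = UNIV" if "perfect_set P" for P
  proof -
    have "y = f (g (P, y)) \<and> g (P, y) \<in> P" for y
      using that g[of "(P, y)"] inv_into_f_f[OF g_inj] by (auto simp: I_def f_def)
    then show ?thesis by blast
  qed
  moreover have "f x = 1" if "x \<notin> B" for x
    using that g unfolding f_def by auto
  ultimately show ?thesis
    unfolding perfectly_everywhere_surjective_def by blast
qed

end
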